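(* Let $n$ be a positive integer. If $n\equiv 1\pmod 4$, then \[ \sum_{k=0}^{n-1}\frac{(q;q^4)_k^2}{(q^4;q^4)_k^2}\,q^{2k}\equiv \frac{(q^{3};q^4)_{(n-1)/4}}{(q^4;q^4)_{(n-1)/4}}\pmod{\Phi_n(q)}, \] and if $n\equiv 3\pmod 4$, then \[ \sum_{k=0}^{n-1}\frac{(q;q^4)_k^2}{(q^4;q^4)_k^2}\,q^{2k}\equiv 0\pmod{\Phi_n(q)}. \]
   Context: For an indeterminate (or complex number) $a$ and a nonnegative integer $k$, the $q$-Pochhammer symbol is $(a;q)_k=\prod_{j=0}^{k-1}(1-aq^j)$, with $(a;q)_0=1$. $\Phi_n(q)=\prod_{1\le j\le n,\ \gcd(j,n)=1}(q-e^{2\pi i j/n})$ denotes the $n$-th cyclotomic polynomial. A congruence between rational functions in $q$ modulo a polynomial $P(q)$ means that the difference, written as a ratio of polynomials with denominator coprime to $P(q)$, has numerator divisible by $P(q)$. *)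

theory Defs
  imports Complex_Main "HOL-Computational_Algebra.Polynomial_Factorial" "HOL-Computational_Algebra.Fraction_Field"
begin

definition qpoch :: "'a::comm_ring_1 \<Rightarrow> 'a \<Rightarrow> nat \<Rightarrow> 'a" where
  "qpoch a q k = (\<Prod>j<k. 1 - a * q ^ j)"

definition cyclotomic :: "nat \<Rightarrow> complex poly" where
  "cyclotomic n = (\<Prod>j\<in>{j. 1 \<le> j \<and> j \<le> n \<and> coprime j n}.
      [:- exp (2 * of_real pi * \<i> * of_nat j / of_nat n), 1:])"

definition qvar :: "complex poly fract" where
  "qvar = Fract [:0, 1:] 1"

definition rf_cong :: "complex poly fract \<Rightarrow> complex poly fract \<Rightarrow> complex poly \<Rightarrow> bool" where
  "rf_cong x y P \<longleftrightarrow> (\<exists>a b. b \<noteq> 0 \<and> x - y = Fract a b \<and> coprime b P \<and> P dvd a)"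

end

(* At a primitive n-th root of unity z, n odd, put p = z^4; it is again a primitive n-th root.
   Choose M with z^(4M+1) = 1 and M < n: M = (n-1)/4 if n = 1 (mod 4), M = (3n-1)/4 if
   n = 3 (mod 4).  Then z p^M = 1, so (z;p)_k vanishes for k > M, while for k <= M the summand
   equals p^(k^2) [M,k]_p^2.  By the q-Vandermonde identity the sum is the central Gaussian
   binomial [2M,M]_p = (p^(M+1);p)_M / (p;p)_M.  For n = 4M+1 we have p^(M+1) = z^3, which is the
   right-hand side; for n = 4N+3, (p;p)_(2M) contains the factor 1 - p^n = 0.
   Both sides are regular at all primitive n-th roots, and these are exactly the simple roots of
   the cyclotomic polynomial, so the congruence follows from the pointwise identities. *)
theory Submission
  imports Defs "HOL-Analysis.Complex_Transcendental" "HOL-Computational_Algebra.Field_as_Ring"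
begin

section \<open>q-Pochhammer symbols and Gaussian binomial coefficients\<close>

lemma qpoch_0 [simp]: "qpoch a q 0 = 1"
  by (simp add: qpoch_def)

lemma qpoch_Suc: "qpoch a q (Suc k) = qpoch a q k * (1 - a * q ^ k)"
  by (simp add: qpoch_def)

lemma qpoch_add: "qpoch a q (m + k) = qpoch a q m * qpoch (a * q ^ m) q k"
  by (induction k) (simp_all add: qpoch_Suc power_add mult_ac)

lemma qpoch_dvd: "k \<le> n \<Longrightarrow> qpoch a q k dvd qpoch a q n"
  using qpoch_add[of a q k "n - k"] by simp

lemma qpoch_neq_0_mono: "qpoch a q n \<noteq> 0 \<Longrightarrow> k \<le> n \<Longrightarrow> qpoch a q k \<noteq> 0"
  using qpoch_dvd by (metis dvd_0_left)

lemma qpoch_self_eq_0_iff: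
  fixes q :: "'a::idom"
  shows "qpoch q q k = 0 \<longleftrightarrow> (\<exists>j<k. q ^ Suc j = 1)"
  by (auto simp: qpoch_def)

(* The exponent n - k is truncated only when k > n, and then [n,k] = 0. *)
fun qbinomial :: "'a::comm_ring_1 \<Rightarrow> nat \<Rightarrow> nat \<Rightarrow> 'a" where
  "qbinomial q n 0 = 1"
| "qbinomial q 0 (Suc k) = 0"
| "qbinomial q (Suc n) (Suc k) = qbinomial q n (Suc k) + q ^ (n - k) * qbinomial q n k"

lemma qbinomial_eq_0: "n < k \<Longrightarrow> qbinomial q n k = 0"
  by (induction q n k rule: qbinomial.induct) auto

lemma qbinomial_qpoch:
  assumes "k \<le> n"
  shows "qbinomial q n k * qpoch q q k * qpoch q q (n - k) = qpoch q q n"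
  using assms
proof (induction n arbitrary: k)
  case 0
  then show ?case by simp
next
  case (Suc n)
  show ?case
  proof (cases k)
    case 0
    then show ?thesis by simp
  next
    case (Suc i)
    show ?thesis
    proof (cases "i = n")
      case True
      then show ?thesis
        using Suc.IH[of n] \<open>k = Suc i\<close> by (simp add: qbinomial_eq_0 qpoch_Suc) (metis mult.assoc)
    next
      case False
      then obtain d where d: "n = Suc i + d"
        using Suc.prems \<open>k = Suc i\<close> by (metis Suc_le_mono le_Suc_ex le_neq_implies_less less_eq_Suc_le)
      have IH1: "qbinomial q n (Suc i) * qpoch q q (Suc i) * qpoch q q d = qpoch q q n"
        using Suc.IH[of "Suc i"] d by simp
      have IH2: "qbinomial q n i * qpoch q q i * qpoch q q (Suc d) = qpoch q q n"
        using Suc.IH[of i] d by (simp add: Suc_diff_le)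
      have "qbinomial q (Suc n) k * qpoch q q k * qpoch q q (Suc n - k)
          = (1 - q ^ Suc d) * (qbinomial q n (Suc i) * qpoch q q (Suc i) * qpoch q q d)
            + q ^ Suc d * (1 - q ^ Suc i) * (qbinomial q n i * qpoch q q i * qpoch q q (Suc d))"
        using d \<open>k = Suc i\<close> by (simp add: qpoch_Suc algebra_simps)
      also have "\<dots> = qpoch q q n * (1 - q ^ Suc d * q ^ Suc i)"
        unfolding IH1 IH2 by (simp add: algebra_simps)
      also have "q ^ Suc d * q ^ Suc i = q * q ^ n"
        using d by (simp add: power_add mult_ac)
      finally show ?thesis
        by (simp add: qpoch_Suc)
    qed
  qed
qed

(* The exponent m + j - k is truncated only when k - j > m, and then [m, k - j] = 0. *)
lemma qbinomial_vandermonde: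
  "qbinomial q (m + n) k
     = (\<Sum>j\<le>k. q ^ (j * (m + j - k)) * qbinomial q m (k - j) * qbinomial q n j)"
proof (induction n arbitrary: k)
  case 0
  then show ?case
    by (cases k) (simp_all add: sum.atMost_Suc_shift del: sum.atMost_Suc)
next
  case (Suc n)
  show ?case
  proof (cases k)
    case 0
    then show ?thesis by simp
  next
    case (Suc k')
    define T where "T j = q ^ (j * (m + j - k)) * qbinomial q m (k - j)" for j
    have shifted: "T (Suc i) * (q ^ (n - i) * qbinomial q n i)
        = q ^ (m + n - k') * (q ^ (i * (m + i - k')) * qbinomial q m (k' - i) * qbinomial q n i)"
      for i
    proof -
      consider "m < k' - i" | "n < i" | d e where "m + i = k' + d" "n = i + e"
        by (metis le_Suc_ex less_diff_conv not_le)
      then show ?thesis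
      proof cases
        case 3
        then have "Suc i * (m + Suc i - Suc k') + (n - i) = (m + n - k') + i * (m + i - k')"
          using \<open>k = Suc k'\<close> by simp
        then have "q ^ (Suc i * (m + Suc i - Suc k')) * q ^ (n - i) = q ^ (m + n - k') * q ^ (i * (m + i - k'))"
          by (metis power_add)
        then show ?thesis
          unfolding T_def \<open>k = Suc k'\<close> diff_Suc_Suc by (simp only: ac_simps)
      qed (simp_all add: qbinomial_eq_0 T_def \<open>k = Suc k'\<close>)
    qed
    have "(\<Sum>j\<le>k. T j * qbinomial q (Suc n) j)
        = (\<Sum>j\<le>k. T j * qbinomial q n j) + (\<Sum>i\<le>k'. T (Suc i) * (q ^ (n - i) * qbinomial q n i))"
      unfolding \<open>k = Suc k'\<close> sum.atMost_Suc_shift by (simp add: distrib_left sum.distrib)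
    also have "\<dots> = qbinomial q (m + n) k + q ^ (m + n - k') * qbinomial q (m + n) k'"
      unfolding shifted sum_distrib_left[symmetric] by (simp only: Suc.IH T_def)
    also have "\<dots> = qbinomial q (m + Suc n) k"
      using \<open>k = Suc k'\<close> by simp
    finally show ?thesis
      unfolding T_def by simp
  qed
qed

lemma qbinomial_symmetric:
  fixes q :: "'a::idom"
  assumes "qpoch q q n \<noteq> 0" "k \<le> n"
  shows "qbinomial q n (n - k) = qbinomial q n k"
proof -
  have "qpoch q q k * qpoch q q (n - k) \<noteq> 0"
    using assms qpoch_neq_0_mono[OF assms(1)] by simp
  moreover have "qbinomial q n (n - k) * (qpoch q q k * qpoch q q (n - k))
      = qbinomial q n k * (qpoch q q k * qpoch q q (n - k))"
    using qbinomial_qpoch[of k n q] qbinomial_qpoch[of "n - k" n q] assms(2)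
    by (simp add: mult_ac)
  ultimately show ?thesis
    by simp
qed

lemma qbinomial_mult_qpoch:
  fixes q :: "'a::idom"
  assumes "qpoch q q m \<noteq> 0"
  shows "qbinomial q (m + k) k * qpoch q q k = qpoch (q ^ Suc m) q k"
proof -
  have "qbinomial q (m + k) k * qpoch q q k * qpoch q q m = qpoch q q m * qpoch (q ^ Suc m) q k"
    using qbinomial_qpoch[of k "m + k" q] qpoch_add[of q q m k] by simp
  then show ?thesis
    using assms by (simp add: mult.commute)
qed

lemma qpoch_reflect:
  assumes "a * q ^ M = 1" "k \<le> M"
  shows "qpoch a q k * qpoch q q (M - k) = (\<Prod>j<k. - (a * q ^ j)) * qpoch q q M"
  using assms(2)
proof (induction k)
  case 0
  then show ?case by simp
next
  case (Suc k)
  then obtain d where d: "M - k = Suc d"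
    by (metis Suc_diff_Suc Suc_le_eq)
  have "k + Suc d = M"
    using Suc.prems d by simp
  then have "a * q ^ k * q ^ Suc d = 1"
    using assms(1) by (metis mult.assoc power_add)
  then have "1 - a * q ^ k = - (a * q ^ k) * (1 - q * q ^ d)"
    by (simp add: algebra_simps)
  moreover have "M - Suc k = d"
    using d by simp
  ultimately show ?case
    using Suc d by (simp add: qpoch_Suc mult_ac)
qed

section \<open>The series at a root of unity\<close>

lemma qpoch_div_qpoch_reflect:
  fixes z p :: "'a::field"
  assumes "z * p ^ M = 1" "qpoch p p M \<noteq> 0" "k \<le> M"
  shows "qpoch z p k / qpoch p p k = (\<Prod>j<k. - (z * p ^ j)) * qbinomial p M k"
proof -
  have nz: "qpoch p p k \<noteq> 0" "qpoch p p (M - k) \<noteq> 0"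
    using qpoch_neq_0_mono[OF assms(2)] assms(3) by simp_all
  have "qpoch z p k * qpoch p p (M - k)
      = (\<Prod>j<k. - (z * p ^ j)) * qbinomial p M k * qpoch p p k * qpoch p p (M - k)"
    using qpoch_reflect[OF assms(1,3)] qbinomial_qpoch[OF assms(3), of p] by (simp add: mult_ac)
  then show ?thesis
    using nz by (simp add: field_simps)
qed

lemma prod_minus_geometric_square:
  fixes z :: "'a::comm_ring_1"
  shows "(\<Prod>j<k. - (z * (z ^ 4) ^ j))\<^sup>2 * z ^ (2 * k) = (z ^ 4) ^ (k * k)"
proof (induction k)
  case (Suc k)
  have step: "(z * (z ^ 4) ^ k)\<^sup>2 * z\<^sup>2 = (z ^ 4) ^ (2 * k + 1)"
  proof -
    have "(z * (z ^ 4) ^ k)\<^sup>2 * z\<^sup>2 = z ^ 4 * ((z ^ 4) ^ k)\<^sup>2"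
      by (simp add: power_mult_distrib mult_ac flip: power_add)
    then show ?thesis
      by (simp add: power_mult mult.commute)
  qed
  have "(\<Prod>j<Suc k. - (z * (z ^ 4) ^ j))\<^sup>2 * z ^ (2 * Suc k)
      = ((\<Prod>j<k. - (z * (z ^ 4) ^ j))\<^sup>2 * z ^ (2 * k)) * ((z * (z ^ 4) ^ k)\<^sup>2 * z\<^sup>2)"
    unfolding mult_Suc_right power_add prod.lessThan_Suc by (simp add: power_mult_distrib mult_ac)
  also have "\<dots> = (z ^ 4) ^ (k * k + (2 * k + 1))"
    unfolding Suc.IH step by (simp add: power_add)
  also have "k * k + (2 * k + 1) = Suc k * Suc k"
    by simp
  finally show ?case .
qed simp

definition qseries :: "'a::field \<Rightarrow> nat \<Rightarrow> 'a" where
  "qseries q n = (\<Sum>k<n. (qpoch q (q ^ 4) k)\<^sup>2 / (qpoch (q ^ 4) (q ^ 4) k)\<^sup>2 * q ^ (2 * k))"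

lemma qseries_at_root:
  fixes z :: "'a::field"
  assumes root: "z ^ (4 * M + 1) = 1" and "M < n" and nz: "qpoch (z ^ 4) (z ^ 4) M \<noteq> 0"
  shows "qseries z n = qbinomial (z ^ 4) (2 * M) M"
proof -
  define p where "p = z ^ 4"
  have zp: "z * p ^ M = 1"
    using root by (simp add: p_def power_mult[symmetric] mult.commute)
  have vanish: "qpoch z p k = 0" if "M < k" for k
  proof -
    have "qpoch z p (Suc M) = 0"
      using zp by (simp add: qpoch_Suc)
    then show ?thesis
      using qpoch_dvd[of "Suc M" k z p] that by simp
  qed
  have summand: "(qpoch z p k)\<^sup>2 / (qpoch p p k)\<^sup>2 * z ^ (2 * k)
      = p ^ (k * k) * qbinomial p M (M - k) * qbinomial p M k" if "k \<le> M" for k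
  proof -
    have "(qpoch z p k)\<^sup>2 / (qpoch p p k)\<^sup>2 * z ^ (2 * k)
        = (\<Prod>j<k. - (z * p ^ j))\<^sup>2 * z ^ (2 * k) * (qbinomial p M k)\<^sup>2"
      unfolding power_divide[symmetric] qpoch_div_qpoch_reflect[OF zp nz[folded p_def] that]
      by (simp add: power_mult_distrib mult_ac)
    then show ?thesis
      using prod_minus_geometric_square[of z k] qbinomial_symmetric[OF nz[folded p_def] that]
      by (simp add: p_def power2_eq_square)
  qed
  have "qseries z n = (\<Sum>k\<le>M. (qpoch z p k)\<^sup>2 / (qpoch p p k)\<^sup>2 * z ^ (2 * k))"
    unfolding qseries_def p_def[symmetric]
    by (rule sum.mono_neutral_right) (use \<open>M < n\<close> vanish in auto)
  also have "\<dots> = (\<Sum>k\<le>M. p ^ (k * (M + k - M)) * qbinomial p M (M - k) * qbinomial p M k)"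
    using summand by simp
  also have "\<dots> = qbinomial p (M + M) M"
    by (rule qbinomial_vandermonde[symmetric])
  finally show ?thesis
    by (simp add: p_def mult_2)
qed

section \<open>Evaluating rational functions\<close>

definition fract_evals_on :: "'a::field set \<Rightarrow> 'a poly fract \<Rightarrow> ('a \<Rightarrow> 'a) \<Rightarrow> bool" where
  "fract_evals_on Z x f \<longleftrightarrow>
     (\<exists>a b. b \<noteq> 0 \<and> x = Fract a b \<and> (\<forall>z\<in>Z. poly b z \<noteq> 0 \<and> f z = poly a z / poly b z))"

lemma fract_evals_onE:
  assumes "fract_evals_on Z x f"
  obtains a b where "b \<noteq> 0" "x = Fract a b" "\<And>z. z \<in> Z \<Longrightarrow> poly b z \<noteq> 0"
    "\<And>z. z \<in> Z \<Longrightarrow> f z = poly a z / poly b z"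
  using assms unfolding fract_evals_on_def by blast

lemma fract_evals_on_empty: "fract_evals_on {} x f"
  unfolding fract_evals_on_def by (cases x) auto

lemma fract_evals_on_poly: "fract_evals_on Z (Fract p 1) (poly p)"
  unfolding fract_evals_on_def by (intro exI[of _ p] exI[of _ 1]) simp

lemma fract_evals_on_0: "fract_evals_on Z 0 (\<lambda>_. 0)"
  unfolding fract_evals_on_def Zero_fract_def by (intro exI[of _ 0] exI[of _ 1]) simp

lemma fract_evals_on_1: "fract_evals_on Z 1 (\<lambda>_. 1)"
  unfolding fract_evals_on_def One_fract_def by (intro exI[of _ 1] exI[of _ 1]) simp

lemma fract_evals_on_add:
  assumes "fract_evals_on Z x f" "fract_evals_on Z y g"
  shows "fract_evals_on Z (x + y) (\<lambda>z. f z + g z)"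
proof -
  obtain a b c d where "b \<noteq> 0" "x = Fract a b" "\<And>z. z \<in> Z \<Longrightarrow> poly b z \<noteq> 0 \<and> f z = poly a z / poly b z"
    "d \<noteq> 0" "y = Fract c d" "\<And>z. z \<in> Z \<Longrightarrow> poly d z \<noteq> 0 \<and> g z = poly c z / poly d z"
    using assms by (metis fract_evals_onE)
  then show ?thesis
    unfolding fract_evals_on_def
    by (intro exI[of _ "a * d + c * b"] exI[of _ "b * d"]) (simp add: add_frac_eq)
qed

lemma fract_evals_on_diff:
  assumes "fract_evals_on Z x f" "fract_evals_on Z y g"
  shows "fract_evals_on Z (x - y) (\<lambda>z. f z - g z)"
proof -
  obtain a b c d where "b \<noteq> 0" "x = Fract a b" "\<And>z. z \<in> Z \<Longrightarrow> poly b z \<noteq> 0 \<and> f z = poly a z / poly b z"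
    "d \<noteq> 0" "y = Fract c d" "\<And>z. z \<in> Z \<Longrightarrow> poly d z \<noteq> 0 \<and> g z = poly c z / poly d z"
    using assms by (metis fract_evals_onE)
  then show ?thesis
    unfolding fract_evals_on_def
    by (intro exI[of _ "a * d - c * b"] exI[of _ "b * d"]) (simp add: diff_frac_eq)
qed

lemma fract_evals_on_mult:
  assumes "fract_evals_on Z x f" "fract_evals_on Z y g"
  shows "fract_evals_on Z (x * y) (\<lambda>z. f z * g z)"
proof -
  obtain a b c d where "b \<noteq> 0" "x = Fract a b" "\<And>z. z \<in> Z \<Longrightarrow> poly b z \<noteq> 0 \<and> f z = poly a z / poly b z"
    "d \<noteq> 0" "y = Fract c d" "\<And>z. z \<in> Z \<Longrightarrow> poly d z \<noteq> 0 \<and> g z = poly c z / poly d z"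
    using assms by (metis fract_evals_onE)
  then show ?thesis
    unfolding fract_evals_on_def
    by (intro exI[of _ "a * c"] exI[of _ "b * d"]) simp
qed

lemma fract_evals_on_divide:
  assumes "fract_evals_on Z x f" "fract_evals_on Z y g" "\<And>z. z \<in> Z \<Longrightarrow> g z \<noteq> 0"
  shows "fract_evals_on Z (x / y) (\<lambda>z. f z / g z)"
proof (cases "Z = {}")
  case False
  obtain a b c d where "b \<noteq> 0" "x = Fract a b" "\<And>z. z \<in> Z \<Longrightarrow> poly b z \<noteq> 0 \<and> f z = poly a z / poly b z"
    "d \<noteq> 0" "y = Fract c d" "\<And>z. z \<in> Z \<Longrightarrow> poly d z \<noteq> 0 \<and> g z = poly c z / poly d z"
    using assms by (metis fract_evals_onE)
  moreover from this have "c \<noteq> 0" "\<And>z. z \<in> Z \<Longrightarrow> poly c z \<noteq> 0"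
    using assms(3) False by fastforce+
  ultimately show ?thesis
    unfolding fract_evals_on_def
    by (intro exI[of _ "a * d"] exI[of _ "b * c"]) simp
qed (simp add: fract_evals_on_empty)

lemma fract_evals_on_power: "fract_evals_on Z x f \<Longrightarrow> fract_evals_on Z (x ^ m) (\<lambda>z. f z ^ m)"
  by (induction m) (auto intro: fract_evals_on_mult fract_evals_on_1)

lemma fract_evals_on_sum:
  "(\<And>k. k \<in> A \<Longrightarrow> fract_evals_on Z (x k) (f k)) \<Longrightarrow> fract_evals_on Z (\<Sum>k\<in>A. x k) (\<lambda>z. \<Sum>k\<in>A. f k z)"
  by (induction A rule: infinite_finite_induct) (auto intro: fract_evals_on_add fract_evals_on_0)

lemma fract_evals_on_prod:
  "(\<And>k. k \<in> A \<Longrightarrow> fract_evals_on Z (x k) (f k)) \<Longrightarrow> fract_evals_on Z (\<Prod>k\<in>A. x k) (\<lambda>z. \<Prod>k\<in>A. f k z)"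
  by (induction A rule: infinite_finite_induct) (auto intro: fract_evals_on_mult fract_evals_on_1)

lemma fract_evals_on_qvar: "fract_evals_on Z qvar (\<lambda>z. z)"
proof -
  have "poly [:0, 1:] = (\<lambda>z::complex. z)"
    by (simp add: fun_eq_iff)
  then show ?thesis
    using fract_evals_on_poly[of Z "[:0, 1:]"] by (simp add: qvar_def)
qed

lemma fract_evals_on_qpoch:
  assumes "fract_evals_on Z x f" "fract_evals_on Z y g"
  shows "fract_evals_on Z (qpoch x y k) (\<lambda>z. qpoch (f z) (g z) k)"
  unfolding qpoch_def
  by (intro fract_evals_on_prod fract_evals_on_diff fract_evals_on_1 fract_evals_on_mult
      fract_evals_on_power assms)

lemma fract_evals_on_qseries:
  assumes "\<And>z k. z \<in> Z \<Longrightarrow> k < n \<Longrightarrow> qpoch (z ^ 4) (z ^ 4) k \<noteq> 0"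
  shows "fract_evals_on Z (qseries qvar n) (\<lambda>z. qseries z n)"
  unfolding qseries_def using assms
  by (intro fract_evals_on_sum fract_evals_on_mult fract_evals_on_divide fract_evals_on_power
      fract_evals_on_qpoch fract_evals_on_qvar) auto

section \<open>Primitive roots of unity and the cyclotomic polynomial\<close>

lemma prod_linear_factors_dvd:
  fixes p :: "'a::idom poly"
  assumes "finite R" "\<And>x. x \<in> R \<Longrightarrow> poly p x = 0"
  shows "(\<Prod>x\<in>R. [:- x, 1:]) dvd p"
  using assms
proof (induction R arbitrary: p rule: finite_induct)
  case (insert x R)
  then obtain c where c: "p = (\<Prod>y\<in>R. [:- y, 1:]) * c"
    by blast
  have "poly (\<Prod>y\<in>R. [:- y, 1:]) x \<noteq> 0"
    using insert.hyps by (auto simp: poly_prod)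
  then have "poly c x = 0"
    using insert.prems[of x] c by simp
  then have "[:- x, 1:] dvd c"
    by (simp add: poly_eq_0_iff_dvd)
  then show ?case
    unfolding c prod.insert[OF insert.hyps] by (metis dvd_refl mult.commute mult_dvd_mono)
qed simp

lemma coprime_prod_linear_factors:
  fixes p :: "'a::field_gcd poly"
  assumes "\<And>x. x \<in> R \<Longrightarrow> poly p x \<noteq> 0"
  shows "coprime p (\<Prod>x\<in>R. [:- x, 1:])"
proof (rule prod_coprime_right)
  fix x assume "x \<in> R"
  then have "\<not> [:- x, 1:] dvd p"
    using assms by (simp add: poly_eq_0_iff_dvd[symmetric])
  moreover have "prime_elem [:- x, 1:]"
    by (rule prime_elem_linear_field_poly) simp
  ultimately show "coprime p [:- x, 1:]"
    using prime_elem_imp_coprime coprime_commute by blast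
qed

definition primitive_roots :: "nat \<Rightarrow> complex set" where
  "primitive_roots n =
     (\<lambda>j. exp (2 * of_real pi * \<i> * of_nat j / of_nat n)) ` {j. 1 \<le> j \<and> j \<le> n \<and> coprime j n}"

lemma finite_primitive_roots: "finite (primitive_roots n)"
  unfolding primitive_roots_def by (rule finite_imageI) (rule finite_subset[of _ "{..n}"], auto)

lemma cyclotomic_eq_prod_primitive_roots:
  assumes "n > 0"
  shows "cyclotomic n = (\<Prod>z\<in>primitive_roots n. [:- z, 1:])"
proof -
  have "inj_on (\<lambda>j. exp (2 * of_real pi * \<i> * of_nat j / of_nat n)) {j. 1 \<le> j \<and> j \<le> n}"
  proof (rule inj_onI)
    fix i j assume "i \<in> {j. 1 \<le> j \<and> j \<le> n}" "j \<in> {j. 1 \<le> j \<and> j \<le> n}"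
      and "exp (2 * of_real pi * \<i> * of_nat i / of_nat n) = exp (2 * of_real pi * \<i> * of_nat j / of_nat n)"
    then have "i mod n = j mod n"
      using complex_root_unity_eq[of n i j] assms by simp
    with \<open>i \<in> _\<close> \<open>j \<in> _\<close> show "i = j"
      by (metis le_neq_implies_less mem_Collect_eq mod_less mod_self not_one_le_zero)
  qed
  then show ?thesis
    unfolding cyclotomic_def primitive_roots_def
    by (subst prod.reindex) (auto elim: inj_on_subset)
qed

lemma primitive_root_power_eq_1_iff:
  assumes "n > 0" "z \<in> primitive_roots n"
  shows "z ^ t = 1 \<longleftrightarrow> n dvd t"
proof -
  obtain j where j: "z = exp (2 * of_real pi * \<i> * of_nat j / of_nat n)" "coprime j n"
    using assms(2) unfolding primitive_roots_def by blast
  have "z ^ t = exp (2 * of_real pi * \<i> * of_nat (j * t) / of_nat n)"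
    unfolding j(1) exp_of_nat_mult[symmetric] by (simp add: field_simps)
  then have "z ^ t = 1 \<longleftrightarrow> n dvd j * t"
    using assms(1) complex_root_unity_eq_1[of n "j * t"] by simp
  also have "\<dots> \<longleftrightarrow> n dvd t"
    using j(2) by (simp add: coprime_commute coprime_dvd_mult_right_iff)
  finally show ?thesis .
qed

lemma rf_cong_cyclotomicI:
  assumes "n > 0" "fract_evals_on (primitive_roots n) x f" "fract_evals_on (primitive_roots n) y g"
    and "\<And>z. z \<in> primitive_roots n \<Longrightarrow> f z = g z"
  shows "rf_cong x y (cyclotomic n)"
proof -
  obtain a b where ab: "b \<noteq> 0" "x - y = Fract a b" "\<And>z. z \<in> primitive_roots n \<Longrightarrow> poly b z \<noteq> 0"
      "\<And>z. z \<in> primitive_roots n \<Longrightarrow> f z - g z = poly a z / poly b z"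
    using fract_evals_on_diff[OF assms(2,3)] by (rule fract_evals_onE) blast
  have "poly a z = 0" if "z \<in> primitive_roots n" for z
    using ab(3,4)[OF that] assms(4)[OF that] by simp
  then have "cyclotomic n dvd a"
    unfolding cyclotomic_eq_prod_primitive_roots[OF assms(1)]
    by (rule prod_linear_factors_dvd[OF finite_primitive_roots])
  moreover have "coprime b (cyclotomic n)"
    unfolding cyclotomic_eq_prod_primitive_roots[OF assms(1)] using ab(3) by (rule coprime_prod_linear_factors)
  ultimately show ?thesis
    unfolding rf_cong_def using ab(1,2) by blast
qed

lemma qpoch_primitive_root_neq_0:
  assumes "odd n" "z \<in> primitive_roots n" "k < n"
  shows "qpoch (z ^ 4) (z ^ 4) k \<noteq> 0"
proof -
  have "coprime n 4"
    using assms(1) coprime_power_right_iff[of n 2 2] by simp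
  have "(z ^ 4) ^ Suc j \<noteq> 1" if "j < k" for j
  proof
    assume "(z ^ 4) ^ Suc j = 1"
    then have "z ^ (4 * Suc j) = 1"
      by (simp only: power_mult)
    then have "n dvd 4 * Suc j"
      using primitive_root_power_eq_1_iff[OF odd_pos[OF assms(1)] assms(2)] by blast
    then have "n dvd Suc j"
      using \<open>coprime n 4\<close> coprime_dvd_mult_right_iff by blast
    then show False
      using that assms(3) by (auto dest: dvd_imp_le)
  qed
  then show ?thesis
    by (simp add: qpoch_self_eq_0_iff)
qed

lemma qseries_primitive_root_1_mod_4:
  assumes n: "n = 4 * M + 1" and z: "z \<in> primitive_roots n"
  shows "qseries z n = qpoch (z ^ 3) (z ^ 4) M / qpoch (z ^ 4) (z ^ 4) M"
proof -
  have "n > 0" "M < n" "4 * Suc M = n + 3"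
    using n by simp_all
  have nz: "qpoch (z ^ 4) (z ^ 4) M \<noteq> 0"
    using n z \<open>M < n\<close> by (intro qpoch_primitive_root_neq_0) auto
  have zn: "z ^ n = 1"
    using primitive_root_power_eq_1_iff[OF \<open>n > 0\<close> z] by simp
  then have "z ^ (4 * M + 1) = 1"
    using n by simp
  then have "qseries z n = qbinomial (z ^ 4) (M + M) M"
    using \<open>M < n\<close> nz unfolding mult_2[symmetric] by (rule qseries_at_root)
  moreover have "(z ^ 4) ^ Suc M = z ^ 3"
    using zn \<open>4 * Suc M = n + 3\<close> by (metis mult_1 power_add power_mult)
  ultimately show ?thesis
    using qbinomial_mult_qpoch[OF nz, of M] nz by (simp add: eq_divide_eq)
qed

lemma qseries_primitive_root_3_mod_4:
  assumes n: "n = 4 * N + 3" and z: "z \<in> primitive_roots n"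
  shows "qseries z n = 0"
proof -
  define M where "M = 3 * N + 2"
  have "n > 0" "M < n" "n - 1 < 2 * M" "4 * M + 1 = n * 3"
    using n by (simp_all add: M_def)
  have nz: "qpoch (z ^ 4) (z ^ 4) M \<noteq> 0"
    using n z \<open>M < n\<close> by (intro qpoch_primitive_root_neq_0) auto
  have zn: "z ^ n = 1"
    using primitive_root_power_eq_1_iff[OF \<open>n > 0\<close> z] by simp
  then have "z ^ (4 * M + 1) = 1"
    unfolding \<open>4 * M + 1 = n * 3\<close> by (simp add: power_mult)
  then have "qseries z n = qbinomial (z ^ 4) (2 * M) M"
    using \<open>M < n\<close> nz by (rule qseries_at_root)
  moreover have "qpoch (z ^ 4) (z ^ 4) (2 * M) = 0"
  proof -
    have "(z ^ 4) ^ n = (z ^ n) ^ 4"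
      by (simp only: power_mult[symmetric] mult.commute)
    then have "(z ^ 4) ^ Suc (n - 1) = 1"
      using zn \<open>n > 0\<close> by simp
    then show ?thesis
      unfolding qpoch_self_eq_0_iff using \<open>n - 1 < 2 * M\<close> by blast
  qed
  ultimately show ?thesis
    using qbinomial_qpoch[of M "2 * M" "z ^ 4"] nz by simp
qed

theorem theorem1:
  fixes n :: nat
  assumes "n > 0"
  shows "(n mod 4 = 1 \<longrightarrow>
           rf_cong (\<Sum>k<n. (qpoch qvar (qvar ^ 4) k)\<^sup>2 / (qpoch (qvar ^ 4) (qvar ^ 4) k)\<^sup>2 * qvar ^ (2 * k))
                   (qpoch (qvar ^ 3) (qvar ^ 4) ((n - 1) div 4) / qpoch (qvar ^ 4) (qvar ^ 4) ((n - 1) div 4))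
                   (cyclotomic n))
       \<and> (n mod 4 = 3 \<longrightarrow>
           rf_cong (\<Sum>k<n. (qpoch qvar (qvar ^ 4) k)\<^sup>2 / (qpoch (qvar ^ 4) (qvar ^ 4) k)\<^sup>2 * qvar ^ (2 * k))
                   0 (cyclotomic n))"
proof -
  have lhs: "fract_evals_on (primitive_roots n) (qseries qvar n) (\<lambda>z. qseries z n)" if "odd n"
    using qpoch_primitive_root_neq_0[OF that] by (rule fract_evals_on_qseries)
  show ?thesis
    unfolding qseries_def[symmetric]
  proof (intro conjI impI)
    assume "n mod 4 = 1"
    define M where "M = (n - 1) div 4"
    have n: "n = 4 * M + 1"
      unfolding M_def using \<open>n mod 4 = 1\<close> by presburger
    then have "odd n"
      by simp
    have rhs: "fract_evals_on (primitive_roots n)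
        (qpoch (qvar ^ 3) (qvar ^ 4) M / qpoch (qvar ^ 4) (qvar ^ 4) M)
        (\<lambda>z. qpoch (z ^ 3) (z ^ 4) M / qpoch (z ^ 4) (z ^ 4) M)"
      using qpoch_primitive_root_neq_0[of n] n
      by (intro fract_evals_on_divide fract_evals_on_qpoch fract_evals_on_power fract_evals_on_qvar) auto
    show "rf_cong (qseries qvar n)
        (qpoch (qvar ^ 3) (qvar ^ 4) ((n - 1) div 4) / qpoch (qvar ^ 4) (qvar ^ 4) ((n - 1) div 4))
        (cyclotomic n)"
      unfolding M_def[symmetric] using qseries_primitive_root_1_mod_4[OF n]
      by (rule rf_cong_cyclotomicI[OF assms lhs[OF \<open>odd n\<close>] rhs])
  next
    assume "n mod 4 = 3"
    then obtain N where n: "n = 4 * N + 3"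
      by (metis mod_mult_div_eq add.commute)
    then have "odd n"
      by simp
    show "rf_cong (qseries qvar n) 0 (cyclotomic n)"
      using qseries_primitive_root_3_mod_4[OF n]
      by (rule rf_cong_cyclotomicI[OF assms lhs[OF \<open>odd n\<close>] fract_evals_on_0])
  qed
qed

end
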